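(* Let $n\ge 1$, let $x_0,\dots,x_n\in C[0,1]$ be real-valued with $x_k(\xi)\neq x_{k-1}(\xi)$ for all $\xi\in[0,1]$ and $k=1,\dots,n$. Let $F:Q[0,1]\to\mathbb{R}$ be $(n-1)$-times Gâteaux differentiable. Let $a_0\in\mathbb{R}$ and let $a_1,\dots,a_n\in C[0,1]$. Suppose that for every $\xi\in[0,1]$ and every $i\in\{0,1,\dots,n\}$ the continued fraction $Q_n(x^i(\cdot,\xi),\xi)$ is well defined and the interpolation conditions $$Q_n(x^i(\cdot,\xi),\xi)=F(x^i(\cdot,\xi)),\qquad i=0,1,\dots,n,\ \ \xi\in[0,1],$$ hold. Then: (i) $a_0=F(x_0)$; (ii) the function $\xi\mapsto F(x^1(\cdot,\xi))$ is differentiable on $[0,1]$ (one-sidedly at the endpoints) and $$a_1(\xi)=\frac{-1}{x_1(\xi)-x_0(\xi)}\,\frac{d}{d\xi}F(x^1(\cdot,\xi)),\qquad \xi\in[0,1];$$ (iii) for each $k\in\{2,\dots,n\}$ and each relatively open subset $J\subseteq[0,1]$ on which $G_k(\xi)$ is well defined, $G_k$ is differentiable on $J$ and $$a_k(\xi)=\frac{-1}{x_k(\xi)-x_{k-1}(\xi)}\,\frac{d}{d\xi}G_k(\xi),\qquad \xi\in J .$$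
   Context: Continued fraction notation: for quantities $b_0,c_1,b_1,\dots,c_m,b_m$, the finite continued fraction $b_0+\frac{c_1}{b_1}+\frac{c_2}{b_2}+\dots+\frac{c_m}{b_m}$ means $b_0+\cfrac{c_1}{b_1+\cfrac{c_2}{b_2+\dots+\cfrac{c_m}{b_m}}}$; it is called well defined if, when it is evaluated from the innermost level outward, every denominator encountered is nonzero. $Q[0,1]$ denotes the space of real-valued piecewise continuous functions on $[0,1]$. $H$ is the Heaviside function, $H(t)=1$ for $t\ge 0$, $H(t)=0$ for $t<0$. Given $x_0,\dots,x_n\in C[0,1]$, the continual nodes are $x^0(z,\xi):=x_0(z)$ and $x^i(z,\xi):=x_0(z)+H(z-\xi)\,(x_i(z)-x_0(z))$ for $i=1,\dots,n$, $z,\xi\in[0,1]$; for fixed $\xi$, $x^i(\cdot,\xi)\in Q[0,1]$. Integral continued C-fraction: given a number $a_0$ and kernels $a_1,\dots,a_n:[0,1]\to\mathbb{R}$, for $x\in Q[0,1]$ and $\xi\in[0,1]$ put $A_j(x,\xi):=\int_0^1 a_j(z)\,[x(z)-x^{j-1}(z,\xi)]\,dz$ ($j=1,\dots,n$) and $$Q_n(x(\cdot),\xi):=a_0+\frac{A_1(x,\xi)}{1}+\frac{A_2(x,\xi)}{1}+\dots+\frac{A_n(x,\xi)}{1}.$$ For $k\in\{2,\dots,n\}$, $j\in\{1,\dots,k-1\}$ and $\xi\in[0,1]$ put $A^{(k)}_j(\xi):=\int_0^1 a_j(z)\,[x^k(z,\xi)-x^{j-1}(z,\xi)]\,dz$ and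 $$G_k(\xi):=\cfrac{A^{(k)}_{k-1}(\xi)}{-1+\cfrac{A^{(k)}_{k-2}(\xi)}{-1+\dots+\cfrac{A^{(k)}_{2}(\xi)}{-1+\cfrac{A^{(k)}_{1}(\xi)}{F(x^k(\cdot,\xi))-F(x_0)}}}},$$ so that $G_2(\xi)=A^{(2)}_1(\xi)/\big(F(x^2(\cdot,\xi))-F(x_0)\big)$ and $G_3(\xi)=A^{(3)}_2(\xi)/\big(-1+A^{(3)}_1(\xi)/(F(x^3(\cdot,\xi))-F(x_0))\big)$. *)

theory Defs
  imports "HOL-Analysis.Analysis"
begin

definition heaviside :: "real \<Rightarrow> real" where
  "heaviside t = (if t \<ge> 0 then 1 else 0)"

definition Q01 :: "(real \<Rightarrow> real) set" where
  "Q01 = {f. \<exists>S. finite S \<and> continuous_on ({0..1} - S) f \<and>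
      (\<forall>s\<in>S \<inter> {0..1}.
          (0 < s \<longrightarrow> (\<exists>L. (f \<longlongrightarrow> L) (at_left s))) \<and>
          (s < 1 \<longrightarrow> (\<exists>L. (f \<longlongrightarrow> L) (at_right s))))}"

definition gderiv :: "((real \<Rightarrow> real) \<Rightarrow> real) \<Rightarrow> (real \<Rightarrow> real) \<Rightarrow> (real \<Rightarrow> real) \<Rightarrow> real" where
  "gderiv F h x = deriv (\<lambda>t. F (\<lambda>z. x z + t * h z)) 0"

fun gateaux_n :: "nat \<Rightarrow> ((real \<Rightarrow> real) \<Rightarrow> real) \<Rightarrow> bool" where
  "gateaux_n 0 F = True"
| "gateaux_n (Suc m) F =
     ((\<forall>x\<in>Q01. \<forall>h\<in>Q01. (\<lambda>t. F (\<lambda>z. x z + t * h z)) differentiable (at 0)) \<and>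
      (\<forall>h\<in>Q01. gateaux_n m (\<lambda>x. gderiv F h x)))"

text \<open>Finite continued fraction b0 + c1/b1 + ... + cm/bm, with the list
  [(c1,b1),...,(cm,bm)]. cf_tail gives c1/(b1 + c2/(b2 + ...)).\<close>
fun cf_tail :: "(real \<times> real) list \<Rightarrow> real" where
  "cf_tail [] = 0"
| "cf_tail ((c, b) # rest) = c / (b + cf_tail rest)"

definition cfrac :: "real \<Rightarrow> (real \<times> real) list \<Rightarrow> real" where
  "cfrac b0 ps = b0 + cf_tail ps"

fun cf_wd :: "(real \<times> real) list \<Rightarrow> bool" where
  "cf_wd [] = True"
| "cf_wd ((c, b) # rest) = (cf_wd rest \<and> b + cf_tail rest \<noteq> 0)"

definition cnode :: "(nat \<Rightarrow> real \<Rightarrow> real) \<Rightarrow> nat \<Rightarrow> real \<Rightarrow> real \<Rightarrow> real" where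
  "cnode xs i \<xi> = (\<lambda>z. if i = 0 then xs 0 z
                        else xs 0 z + heaviside (z - \<xi>) * (xs i z - xs 0 z))"

definition Acoef :: "(nat \<Rightarrow> real \<Rightarrow> real) \<Rightarrow> (nat \<Rightarrow> real \<Rightarrow> real) \<Rightarrow> nat \<Rightarrow>
    (real \<Rightarrow> real) \<Rightarrow> real \<Rightarrow> real" where
  "Acoef a xs j x \<xi> = integral {0..1} (\<lambda>z. a j z * (x z - cnode xs (j - 1) \<xi> z))"

definition Qlist :: "(nat \<Rightarrow> real \<Rightarrow> real) \<Rightarrow> (nat \<Rightarrow> real \<Rightarrow> real) \<Rightarrow> nat \<Rightarrow>
    (real \<Rightarrow> real) \<Rightarrow> real \<Rightarrow> (real \<times> real) list" where
  "Qlist a xs n x \<xi> = map (\<lambda>j. (Acoef a xs j x \<xi>, 1)) [1..<Suc n]"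

definition Qn :: "real \<Rightarrow> (nat \<Rightarrow> real \<Rightarrow> real) \<Rightarrow> (nat \<Rightarrow> real \<Rightarrow> real) \<Rightarrow> nat \<Rightarrow>
    (real \<Rightarrow> real) \<Rightarrow> real \<Rightarrow> real" where
  "Qn a0 a xs n x \<xi> = cfrac a0 (Qlist a xs n x \<xi>)"

text \<open>G_k(xi) = A_{k-1}/(-1 + A_{k-2}/(-1 + ... + A_1/(F(x^k) - F(x_0)))),
  where A_j = A_j^{(k)}(xi) = A_j(x^k(.,xi), xi).\<close>
definition Glist :: "((real \<Rightarrow> real) \<Rightarrow> real) \<Rightarrow> (nat \<Rightarrow> real \<Rightarrow> real) \<Rightarrow>
    (nat \<Rightarrow> real \<Rightarrow> real) \<Rightarrow> nat \<Rightarrow> real \<Rightarrow> (real \<times> real) list" where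
  "Glist F a xs k \<xi> =
     map (\<lambda>j. (Acoef a xs j (cnode xs k \<xi>) \<xi>,
               if j = 1 then F (cnode xs k \<xi>) - F (xs 0) else -1))
         (rev [1..<k])"

definition Gk :: "((real \<Rightarrow> real) \<Rightarrow> real) \<Rightarrow> (nat \<Rightarrow> real \<Rightarrow> real) \<Rightarrow>
    (nat \<Rightarrow> real \<Rightarrow> real) \<Rightarrow> nat \<Rightarrow> real \<Rightarrow> real" where
  "Gk F a xs k \<xi> = cf_tail (Glist F a xs k \<xi>)"

definition Gk_wd :: "((real \<Rightarrow> real) \<Rightarrow> real) \<Rightarrow> (nat \<Rightarrow> real \<Rightarrow> real) \<Rightarrow>
    (nat \<Rightarrow> real \<Rightarrow> real) \<Rightarrow> nat \<Rightarrow> real \<Rightarrow> bool" where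
  "Gk_wd F a xs k \<xi> = cf_wd (Glist F a xs k \<xi>)"

end

theory Submission
  imports Defs
begin

text \<open>Along the continual nodes, the coefficient A_j of Q_n vanishes at x^{j-1}, so the
  interpolation condition at x^k only involves the C-fraction A_1/1 + ... + A_k/1, and
  A_k(x^k(.,\<xi>),\<xi>) is the tail integral of a_k (x_k - x_{k-1}) over [\<xi>,1]. Hence
  F(x^1(.,\<xi>)) - F(x_0) is that tail integral for k = 1, while for k \<ge> 2 the fraction G_k
  undoes the first k - 1 levels of the C-fraction and equals 1 + A_k. Both are
  differentiated by the fundamental theorem of calculus.\<close>

definition cf_C :: "(nat \<Rightarrow> real) \<Rightarrow> nat \<Rightarrow> nat \<Rightarrow> real" where
  "cf_C c j k = cf_tail (map (\<lambda>i. (c i, 1)) [j..<Suc k])"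

lemma cf_C_empty [simp]: "cf_C c (Suc k) k = 0"
  by (simp add: cf_C_def)

lemma cf_C_rec: "j \<le> k \<Longrightarrow> cf_C c j k = c j / (1 + cf_C c (Suc j) k)"
  by (simp add: cf_C_def upt_conv_Cons del: upt_Suc)

lemma cf_C_last [simp]: "cf_C c k k = c k"
  by (simp add: cf_C_rec)

lemma cf_tail_append_zero: "cf_tail ys = 0 \<Longrightarrow> cf_tail (xs @ ys) = cf_tail xs"
  by (induction xs) auto

lemma cf_C_truncate:
  assumes "j \<le> Suc k" "k \<le> n" "c (Suc k) = 0"
  shows "cf_C c j n = cf_C c j k"
proof -
  have split: "[j..<Suc n] = [j..<Suc k] @ [Suc k..<Suc n]"
    using assms upt_add_eq_append[of j "Suc k" "n - k"] by simp
  have "cf_tail (map (\<lambda>i. (c i, 1)) [Suc k..<Suc n]) = 0"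
    using assms by (cases "k < n") (simp_all add: upt_conv_Cons del: upt_Suc)
  then show ?thesis
    unfolding cf_C_def split map_append by (rule cf_tail_append_zero)
qed

text \<open>Inverting the first m levels of a C-fraction: the innermost partial denominator
  c_1/1 + ... + c_k/1 is divided back into c_1, and each further level subtracts 1.\<close>
lemma cf_C_inverse:
  assumes "1 \<le> m" "m \<le> k"
    and "cf_wd (map (\<lambda>j. (c j, if j = 1 then cf_C c 1 k else -1)) (rev [1..<Suc m]))"
  shows "cf_tail (map (\<lambda>j. (c j, if j = 1 then cf_C c 1 k else -1)) (rev [1..<Suc m]))
       = 1 + cf_C c (Suc m) k"
  using assms
proof (induction m)
  case 0
  then show ?case by simp
next
  case (Suc m)
  define B where "B j = (if j = 1 then cf_C c 1 k else -1)" for j :: nat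
  define L where "L = map (\<lambda>j. (c j, B j)) (rev [1..<Suc m])"
  have rev_Suc: "rev [1..<Suc (Suc m)] = Suc m # rev [1..<Suc m]"
    by simp
  have den: "B (Suc m) + cf_tail L = cf_C c (Suc m) k"
  proof (cases "m = 0")
    case False
    then have "cf_wd L" using Suc.prems unfolding L_def B_def rev_Suc by simp
    then show ?thesis
      using Suc.IH Suc.prems False unfolding L_def B_def by simp
  qed (simp add: B_def L_def)
  have "cf_C c (Suc m) k \<noteq> 0"
    using Suc.prems den unfolding L_def B_def rev_Suc by simp
  moreover have "cf_C c (Suc m) k = c (Suc m) / (1 + cf_C c (Suc (Suc m)) k)"
    using Suc.prems by (simp add: cf_C_rec)
  ultimately have "c (Suc m) / cf_C c (Suc m) k = 1 + cf_C c (Suc (Suc m)) k"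
    by simp
  then show ?case
    using den unfolding L_def B_def rev_Suc by (simp del: upt_Suc)
qed

lemma Acoef_cnode_next: "Acoef a xs (Suc k) (cnode xs k \<xi>) \<xi> = 0"
  by (simp add: Acoef_def)

lemma Qn_cnode:
  assumes "k \<le> n"
  shows "Qn a0 a xs n (cnode xs k \<xi>) \<xi> = a0 + cf_C (\<lambda>j. Acoef a xs j (cnode xs k \<xi>) \<xi>) 1 k"
  using cf_C_truncate[OF _ assms, of 1 "\<lambda>j. Acoef a xs j (cnode xs k \<xi>) \<xi>"]
  by (simp add: Qn_def cfrac_def Qlist_def cf_C_def Acoef_cnode_next)

lemma Acoef_cnode_self:
  assumes "1 \<le> k" "\<xi> \<in> {0..1}"
  shows "Acoef a xs k (cnode xs k \<xi>) \<xi> = integral {\<xi>..1} (\<lambda>z. a k z * (xs k z - xs (k - 1) z))"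
proof -
  let ?g = "\<lambda>z. a k z * (xs k z - xs (k - 1) z)"
  have "Acoef a xs k (cnode xs k \<xi>) \<xi> = integral {0..1} (\<lambda>z. if z \<in> {\<xi>..1} then ?g z else 0)"
    unfolding Acoef_def
    by (rule integral_cong) (use assms in \<open>auto simp: cnode_def heaviside_def algebra_simps\<close>)
  also have "\<dots> = integral ({\<xi>..1} \<inter> {0..1}) ?g"
    by (rule integral_restrict_Int)
  also have "{\<xi>..1} \<inter> {0..1} = {\<xi>..(1::real)}"
    using assms by auto
  finally show ?thesis .
qed

lemma Gk_cnode:
  assumes "2 \<le> k" "Gk_wd F a xs k \<xi>"
    and "F (cnode xs k \<xi>) - F (xs 0) = cf_C (\<lambda>j. Acoef a xs j (cnode xs k \<xi>) \<xi>) 1 k"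
  shows "Gk F a xs k \<xi> = 1 + Acoef a xs k (cnode xs k \<xi>) \<xi>"
proof -
  define c where "c j = Acoef a xs j (cnode xs k \<xi>) \<xi>" for j
  define L where "L = map (\<lambda>j. (c j, if j = 1 then cf_C c 1 k else -1)) (rev [1..<Suc (k - 1)])"
  have "Glist F a xs k \<xi> = L"
    using assms(1,3) by (simp add: Glist_def L_def c_def[abs_def] del: upt_Suc)
  then have "Gk F a xs k \<xi> = 1 + cf_C c (Suc (k - 1)) k"
    using assms(1,2) cf_C_inverse[of "k - 1" k c]
    unfolding Gk_def Gk_wd_def L_def by simp
  then show ?thesis
    using assms(1) by (simp add: c_def)
qed

lemma has_real_derivative_plus_integral_tail:
  fixes g :: "real \<Rightarrow> real"
  assumes "continuous_on {a..b} g" "J \<subseteq> {a..b}" "\<xi> \<in> J"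
    and "\<forall>s\<in>J. f s = C + integral {s..b} g"
  shows "(f has_real_derivative - g \<xi>) (at \<xi> within J)"
proof -
  have "((\<lambda>s. C + integral {s..b} g) has_real_derivative - g \<xi>) (at \<xi> within {a..b})"
    using integral_has_real_derivative'[OF assms(1)] assms(2,3)
    by (auto intro!: derivative_eq_intros)
  then have "((\<lambda>s. C + integral {s..b} g) has_real_derivative - g \<xi>) (at \<xi> within J)"
    using assms(2) by (rule DERIV_subset)
  then show ?thesis
    by (rule has_field_derivative_transform_within[where d = 1]) (use assms(3,4) in auto)
qed

lemma tail_integral_derivative_recovers_factor:
  fixes p q :: "real \<Rightarrow> real"
  assumes "continuous_on {a..b} p" "continuous_on {a..b} q" "J \<subseteq> {a..b}" "\<xi> \<in> J" "q \<xi> \<noteq> 0"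
    and "\<forall>s\<in>J. f s = C + integral {s..b} (\<lambda>z. p z * q z)"
  shows "\<exists>D. (f has_real_derivative D) (at \<xi> within J) \<and> p \<xi> = (-1 / q \<xi>) * D"
proof -
  have "continuous_on {a..b} (\<lambda>z. p z * q z)"
    using assms(1,2) by (rule continuous_on_mult)
  then have "(f has_real_derivative - (p \<xi> * q \<xi>)) (at \<xi> within J)"
    using assms(3,4,6) by (rule has_real_derivative_plus_integral_tail)
  then show ?thesis
    using assms(5) by (intro exI[of _ "- (p \<xi> * q \<xi>)"]) simp
qed

theorem theorem1:
  fixes n :: nat
    and xs :: "nat \<Rightarrow> real \<Rightarrow> real"
    and F :: "(real \<Rightarrow> real) \<Rightarrow> real"
    and a0 :: real
    and a :: "nat \<Rightarrow> real \<Rightarrow> real"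
  assumes n1: "n \<ge> 1"
    and xs_cont: "\<forall>i\<le>n. continuous_on {0..1} (xs i)"
    and xs_dist: "\<forall>\<xi>\<in>{0..1}. \<forall>k\<in>{1..n}. xs k \<xi> \<noteq> xs (k - 1) \<xi>"
    and F_gat: "gateaux_n (n - 1) F"
    and a_cont: "\<forall>j\<in>{1..n}. continuous_on {0..1} (a j)"
    and wd: "\<forall>\<xi>\<in>{0..1}. \<forall>i\<le>n. cf_wd (Qlist a xs n (cnode xs i \<xi>) \<xi>)"
    and interp: "\<forall>\<xi>\<in>{0..1}. \<forall>i\<le>n. Qn a0 a xs n (cnode xs i \<xi>) \<xi> = F (cnode xs i \<xi>)"
  shows "a0 = F (xs 0)
     \<and> (\<forall>\<xi>\<in>{0..1}. \<exists>D. ((\<lambda>s. F (cnode xs 1 s)) has_real_derivative D) (at \<xi> within {0..1})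
            \<and> a 1 \<xi> = (-1 / (xs 1 \<xi> - xs 0 \<xi>)) * D)
     \<and> (\<forall>k\<in>{2..n}. \<forall>J. J \<subseteq> {0..1} \<and> openin (top_of_set {0..1}) J
            \<and> (\<forall>\<xi>\<in>J. Gk_wd F a xs k \<xi>) \<longrightarrow>
            (\<forall>\<xi>\<in>J. \<exists>D. (Gk F a xs k has_real_derivative D) (at \<xi> within J)
                 \<and> a k \<xi> = (-1 / (xs k \<xi> - xs (k - 1) \<xi>)) * D))"
proof -
  have F_cnode: "F (cnode xs k \<xi>) = a0 + cf_C (\<lambda>j. Acoef a xs j (cnode xs k \<xi>) \<xi>) 1 k"
    if "k \<le> n" "\<xi> \<in> {0..1}" for k \<xi>
    using interp[rule_format, OF that(2,1)] by (simp add: Qn_cnode[OF that(1)])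
  have a0: "a0 = F (xs 0)"
    using F_cnode[of 0 0] by (simp add: cnode_def)
  have cont: "continuous_on {0..1} (a k)" "continuous_on {0..1} (\<lambda>z. xs k z - xs (k - 1) z)"
    if "k \<in> {1..n}" for k
    using that a_cont xs_cont by (auto intro!: continuous_intros)
  show ?thesis
  proof (intro conjI ballI allI impI)
    fix \<xi> :: real assume \<xi>: "\<xi> \<in> {0..1}"
    have "\<forall>s\<in>{0..1}. F (cnode xs 1 s) = F (xs 0) + integral {s..1} (\<lambda>z. a 1 z * (xs 1 z - xs 0 z))"
      using n1 F_cnode[of 1] Acoef_cnode_self[of 1] a0 by simp
    then show "\<exists>D. ((\<lambda>s. F (cnode xs 1 s)) has_real_derivative D) (at \<xi> within {0..1})
        \<and> a 1 \<xi> = (-1 / (xs 1 \<xi> - xs 0 \<xi>)) * D"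
      using cont[of 1] n1 \<xi> xs_dist[rule_format, of \<xi> 1]
      by (intro tail_integral_derivative_recovers_factor[where C = "F (xs 0)"]) auto
  next
    fix k J \<xi>
    assume k: "k \<in> {2..n}" and \<xi>: "\<xi> \<in> J"
      and J: "J \<subseteq> {0..1} \<and> openin (top_of_set {0..1}) J \<and> (\<forall>\<xi>\<in>J. Gk_wd F a xs k \<xi>)"
    have "\<forall>s\<in>J. Gk F a xs k s = 1 + integral {s..1} (\<lambda>z. a k z * (xs k z - xs (k - 1) z))"
      using k J F_cnode[of k] Acoef_cnode_self[of k] Gk_cnode[of k F a xs] a0 by auto
    then show "\<exists>D. (Gk F a xs k has_real_derivative D) (at \<xi> within J)
        \<and> a k \<xi> = (-1 / (xs k \<xi> - xs (k - 1) \<xi>)) * D"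
      using cont[of k] k \<xi> J xs_dist[rule_format, of \<xi> k]
      by (intro tail_integral_derivative_recovers_factor[where C = 1]) auto
  qed (rule a0)
qed

end
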